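(* Let $D$ be a discrete space, $M$ a Hausdorff space and $\pi:D\to M$ a map. Then $D\cup_\pi M$ is countably pracompact if and only if $M$ is countably compact at some dense subset $A\subset M$ with $A\supset\pi(D)$.
   Context: For a discrete space $D$: if $D$ is infinite, $\alpha D=D\cup\{\infty\}$ denotes its one-point (Aleksandrov) compactification; if $D$ is finite, $\alpha D=D\cup\{\infty\}$ is the topological sum of $D$ and a singleton $\{\infty\}$ with $\infty\notin D$. For a map $\pi:D\to M$ into a $T_1$ space $M$, $D\cup_\pi M$ is the subspace $\{(x,\pi(x)):x\in D\}\cup(\{\infty\}\times M)$ of $\alpha D\times M$. A space $X$ is countably compact at a subset $A\subset X$ if every infinite subset $B\subset A$ has an accumulation point in $X$ (a point each neighborhood of which contains infinitely many points of $B$). A space $X$ is countably pracompact if it is countably compact at some dense subset of $X$. *)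

theory Defs
  imports "HOL-Analysis.Analysis"
begin

text \<open>The point \<open>\<infinity>\<close> is represented by \<open>None\<close>, points of D by \<open>Some d\<close>.
  alpha D: one-point compactification of the discrete space D if D is infinite,
  topological sum of the discrete D and a singleton otherwise (then discrete).\<close>

definition alpha_topology :: "'a set \<Rightarrow> 'a option topology" where
  "alpha_topology D =
     (if infinite D
      then topology (\<lambda>U. U \<subseteq> insert None (Some ` D) \<and>
                         (None \<in> U \<longrightarrow> finite (insert None (Some ` D) - U)))
      else discrete_topology (insert None (Some ` D)))"

text \<open>The space D \<union>_\<pi> M as a subspace of alpha D \<times> M.\<close>

definition glue_space :: "'a set \<Rightarrow> ('a \<Rightarrow> 'b) \<Rightarrow> 'b topology \<Rightarrow> ('a option \<times> 'b) topology" where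
  "glue_space D \<pi> M =
     subtopology (prod_topology (alpha_topology D) M)
       ((\<lambda>x. (Some x, \<pi> x)) ` D \<union> ({None} \<times> topspace M))"

definition countably_compact_at :: "'a topology \<Rightarrow> 'a set \<Rightarrow> bool" where
  "countably_compact_at X A \<longleftrightarrow>
     (\<forall>B. B \<subseteq> A \<and> infinite B \<longrightarrow>
        (\<exists>x\<in>topspace X. \<forall>U. openin X U \<and> x \<in> U \<longrightarrow> infinite (U \<inter> B)))"

definition countably_pracompact :: "'a topology \<Rightarrow> bool" where
  "countably_pracompact X \<longleftrightarrow>
     (\<exists>A. A \<subseteq> topspace X \<and> X closure_of A = topspace X \<and> countably_compact_at X A)"

end

theory Submission
  imports Defs
begin

(* Write X = D \<union>_\<pi> M and call the points (Some d, \<pi> d) of X the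
   "graph points".  Each graph point is isolated in X, and a point (None, m) has a
   neighbourhood basis of sets X \<inter> (W \<times> V) with W a cofinite set containing \<infinity> and
   V an open neighbourhood of m in M. *)

section \<open>Accumulation points\<close>

definition accumulation_point :: "'a topology \<Rightarrow> 'a set \<Rightarrow> 'a \<Rightarrow> bool" where
  "accumulation_point X B x \<longleftrightarrow>
     x \<in> topspace X \<and> (\<forall>U. openin X U \<and> x \<in> U \<longrightarrow> infinite (U \<inter> B))"

lemma countably_compact_at_iff_accumulation_point:
  "countably_compact_at X A \<longleftrightarrow> (\<forall>B. B \<subseteq> A \<and> infinite B \<longrightarrow> (\<exists>x. accumulation_point X B x))"
  unfolding countably_compact_at_def accumulation_point_def by blast

lemma accumulation_point_mono:
  "accumulation_point X B x \<Longrightarrow> B \<subseteq> B' \<Longrightarrow> accumulation_point X B' x"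
  unfolding accumulation_point_def by (meson Int_mono infinite_super order_refl)

lemma not_accumulation_point_isolated:
  "openin X {x} \<Longrightarrow> \<not> accumulation_point X B x"
  unfolding accumulation_point_def by (metis finite_Int finite.emptyI finite_insert insertI1)

lemma isolated_in_dense:
  assumes "X closure_of B = topspace X" "openin X {x}"
  shows "x \<in> B"
proof -
  have "x \<in> X closure_of B" using assms openin_subset by fastforce
  then show ?thesis using assms(2) unfolding in_closure_of by blast
qed

text \<open>If a map f sends E into a set at which M is countably compact, then some point
  of M has infinitely many members of E mapped into each of its neighbourhoods
  (either a fibre of f is infinite, or f ` E is infinite and accumulates).\<close>

lemma accumulation_of_image:
  assumes "countably_compact_at M A" "f ` E \<subseteq> A" "A \<subseteq> topspace M" "infinite E"
  shows "\<exists>m\<in>topspace M. \<forall>V. openin M V \<and> m \<in> V \<longrightarrow> infinite {d\<in>E. f d \<in> V}"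
proof (cases "finite (f ` E)")
  case True
  then obtain d0 where d0: "d0 \<in> E" "infinite {d\<in>E. f d = f d0}"
    using pigeonhole_infinite[OF assms(4)] by blast
  show ?thesis
  proof (intro bexI allI impI)
    fix V assume "openin M V \<and> f d0 \<in> V"
    then have "{d\<in>E. f d = f d0} \<subseteq> {d\<in>E. f d \<in> V}" by auto
    then show "infinite {d\<in>E. f d \<in> V}" using d0(2) infinite_super by blast
  qed (use d0(1) assms(2,3) in blast)
next
  case False
  then obtain m where m: "m \<in> topspace M" "\<forall>V. openin M V \<and> m \<in> V \<longrightarrow> infinite (V \<inter> f ` E)"
    using assms(1,2) unfolding countably_compact_at_def by blast
  show ?thesis
  proof (intro bexI allI impI)
    fix V assume "openin M V \<and> m \<in> V"
    then have "infinite (V \<inter> f ` E)" using m(2) by blast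
    moreover have "V \<inter> f ` E \<subseteq> f ` {d\<in>E. f d \<in> V}" by blast
    ultimately show "infinite {d\<in>E. f d \<in> V}" using finite_surj by blast
  qed (rule m(1))
qed

section \<open>The space \<alpha>D\<close>

lemma openin_alpha_topology_infinite:
  assumes "infinite D"
  shows "openin (alpha_topology D) U \<longleftrightarrow>
           U \<subseteq> insert None (Some ` D) \<and> (None \<in> U \<longrightarrow> finite (insert None (Some ` D) - U))"
proof -
  let ?P = "\<lambda>U. U \<subseteq> insert None (Some ` D) \<and> (None \<in> U \<longrightarrow> finite (insert None (Some ` D) - U))"
  have "istopology ?P"
    unfolding istopology_def
  proof (rule conjI; intro allI impI)
    fix S T assume "?P S" "?P T"
    moreover have "insert None (Some ` D) - S \<inter> T
                     = (insert None (Some ` D) - S) \<union> (insert None (Some ` D) - T)" by blast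
    ultimately show "?P (S \<inter> T)" by (metis (no_types, lifting) Int_iff finite_UnI le_infI1)
  next
    fix K assume K: "\<forall>S\<in>K. ?P S"
    show "?P (\<Union>K)"
    proof (intro conjI impI)
      show "\<Union>K \<subseteq> insert None (Some ` D)" using K by blast
      assume "None \<in> \<Union>K"
      then obtain S where "S \<in> K" "None \<in> S" by blast
      then show "finite (insert None (Some ` D) - \<Union>K)"
        using K by (meson Diff_mono Union_upper finite_subset order_refl)
    qed
  qed
  then have "openin (alpha_topology D) = ?P"
    using assms by (simp add: alpha_topology_def topology_inverse')
  then show ?thesis by (simp only:)
qed

lemma topspace_alpha_topology: "topspace (alpha_topology D) = insert None (Some ` D)"
proof (cases "finite D")
  case False
  have "openin (alpha_topology D) (insert None (Some ` D))"
    by (simp add: openin_alpha_topology_infinite[OF False])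
  then show ?thesis
    using openin_topspace openin_subset openin_alpha_topology_infinite[OF False]
    by (metis subset_antisym)
qed (simp add: alpha_topology_def)

lemma openin_alpha_topology_Some: "d \<in> D \<Longrightarrow> openin (alpha_topology D) {Some d}"
proof (cases "finite D")
  case False
  assume "d \<in> D"
  then show ?thesis by (simp add: openin_alpha_topology_infinite[OF False])
qed (simp add: alpha_topology_def)

lemma alpha_topology_nbhd_None:
  assumes "openin (alpha_topology D) W" "None \<in> W"
  shows "finite {d\<in>D. Some d \<notin> W}"
proof (cases "finite D")
  case False
  then have "finite (insert None (Some ` D) - W)"
    using assms openin_alpha_topology_infinite by blast
  then have "finite (the ` (insert None (Some ` D) - W))" by simp
  moreover have "{d\<in>D. Some d \<notin> W} \<subseteq> the ` (insert None (Some ` D) - W)"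
    by (force intro: image_eqI[where x = "Some _"])
  ultimately show ?thesis by (rule finite_subset[rotated])
qed simp

section \<open>The glued space\<close>

definition graph_points :: "'a set \<Rightarrow> ('a \<Rightarrow> 'b) \<Rightarrow> ('a option \<times> 'b) set" where
  "graph_points E \<pi> = (\<lambda>d. (Some d, \<pi> d)) ` E"

lemma topspace_glue_space:
  assumes "\<pi> ` D \<subseteq> topspace M"
  shows "topspace (glue_space D \<pi> M) = graph_points D \<pi> \<union> {None} \<times> topspace M"
  using assms unfolding glue_space_def graph_points_def
  by (auto simp: topspace_alpha_topology)

lemma openin_glue_space_box:
  assumes "openin (alpha_topology D) W" "openin M V"
  shows "openin (glue_space D \<pi> M) (topspace (glue_space D \<pi> M) \<inter> (W \<times> V))"
proof -
  let ?P = "prod_topology (alpha_topology D) M"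
  let ?S = "(\<lambda>x. (Some x, \<pi> x)) ` D \<union> ({None} \<times> topspace M)"
  have "openin ?P (W \<times> V)"
    using assms by (simp add: openin_prod_Times_iff)
  then have "openin (subtopology ?P ?S) (?S \<inter> (W \<times> V))"
    by (rule openin_subtopology_Int2)
  moreover have "topspace (subtopology ?P ?S) \<inter> (W \<times> V) = ?S \<inter> (W \<times> V)"
    using openin_subset[OF \<open>openin ?P (W \<times> V)\<close>] by auto
  ultimately show ?thesis unfolding glue_space_def by simp
qed

lemma glue_space_box_basis:
  assumes "openin (glue_space D \<pi> M) U" "p \<in> U"
  obtains W V where "openin (alpha_topology D) W" "openin M V" "p \<in> W \<times> V"
    "topspace (glue_space D \<pi> M) \<inter> (W \<times> V) \<subseteq> U"
proof -
  obtain G where G: "openin (prod_topology (alpha_topology D) M) G"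
    "U = G \<inter> ((\<lambda>x. (Some x, \<pi> x)) ` D \<union> ({None} \<times> topspace M))"
    using assms(1) unfolding glue_space_def openin_subtopology by blast
  obtain a b where p: "p = (a, b)" by (cases p)
  then have "(a, b) \<in> G" using assms(2) G(2) by blast
  then have "\<exists>W V. openin (alpha_topology D) W \<and> openin M V \<and> a \<in> W \<and> b \<in> V \<and> W \<times> V \<subseteq> G"
    using G(1) unfolding openin_prod_topology_alt by simp
  then obtain W V where WV: "openin (alpha_topology D) W" "openin M V" "a \<in> W" "b \<in> V"
      "W \<times> V \<subseteq> G"
    by blast
  have "topspace (glue_space D \<pi> M) \<subseteq> (\<lambda>x. (Some x, \<pi> x)) ` D \<union> ({None} \<times> topspace M)"
    unfolding glue_space_def by simp
  then have "topspace (glue_space D \<pi> M) \<inter> (W \<times> V) \<subseteq> U"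
    using WV(5) G(2) by blast
  then show ?thesis using that WV p by blast
qed

lemma openin_glue_space_graph_point:
  assumes "\<pi> ` D \<subseteq> topspace M" "d \<in> D"
  shows "openin (glue_space D \<pi> M) {(Some d, \<pi> d)}"
proof -
  have "openin (glue_space D \<pi> M) (topspace (glue_space D \<pi> M) \<inter> ({Some d} \<times> topspace M))"
    by (rule openin_glue_space_box[OF openin_alpha_topology_Some[OF assms(2)] openin_topspace])
  moreover have "topspace (glue_space D \<pi> M) \<inter> ({Some d} \<times> topspace M) = {(Some d, \<pi> d)}"
    using assms by (auto simp: topspace_glue_space graph_points_def)
  ultimately show ?thesis by simp
qed

lemma glue_space_accumulation_point_projects:
  assumes "\<pi> ` D \<subseteq> topspace M" "accumulation_point (glue_space D \<pi> M) B p" "inj_on snd B"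
  obtains m where "p = (None, m)" "accumulation_point M (snd ` B) m"
proof -
  let ?X = "glue_space D \<pi> M"
  have p: "p \<in> topspace ?X" and acc: "\<And>U. openin ?X U \<Longrightarrow> p \<in> U \<Longrightarrow> infinite (U \<inter> B)"
    using assms(2) unfolding accumulation_point_def by blast+
  have "p \<notin> graph_points D \<pi>"
  proof
    assume "p \<in> graph_points D \<pi>"
    then obtain d where "d \<in> D" "p = (Some d, \<pi> d)" unfolding graph_points_def by blast
    then show False
      using openin_glue_space_graph_point[OF assms(1)] not_accumulation_point_isolated assms(2)
      by metis
  qed
  then obtain m where m: "p = (None, m)" "m \<in> topspace M"
    using p by (auto simp: topspace_glue_space[OF assms(1)])
  have "infinite (V \<inter> snd ` B)" if V: "openin M V" "m \<in> V" for V
  proof -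
    let ?U = "topspace ?X \<inter> (topspace (alpha_topology D) \<times> V)"
    have "p \<in> ?U" using p m V by (simp add: topspace_alpha_topology)
    moreover have "openin ?X ?U" by (rule openin_glue_space_box[OF openin_topspace V(1)])
    ultimately have "infinite (?U \<inter> B)" using acc by blast
    then have "infinite (snd ` (?U \<inter> B))"
      using assms(3) by (simp add: finite_image_iff inj_on_Int)
    then show ?thesis by (rule infinite_super[rotated]) auto
  qed
  then show ?thesis using that m unfolding accumulation_point_def by blast
qed

lemma glue_space_accumulation_point_None:
  assumes "m \<in> topspace M"
    and "\<And>W V. openin (alpha_topology D) W \<Longrightarrow> None \<in> W \<Longrightarrow> openin M V \<Longrightarrow> m \<in> V \<Longrightarrow>
           infinite (topspace (glue_space D \<pi> M) \<inter> (W \<times> V) \<inter> B)"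
  shows "accumulation_point (glue_space D \<pi> M) B (None, m)"
  unfolding accumulation_point_def
proof (intro conjI allI impI)
  show "(None, m) \<in> topspace (glue_space D \<pi> M)"
    using assms(1) unfolding glue_space_def by (simp add: topspace_alpha_topology)
  fix U assume "openin (glue_space D \<pi> M) U \<and> (None, m) \<in> U"
  then obtain W V where "openin (alpha_topology D) W" "openin M V" "(None, m) \<in> W \<times> V"
      "topspace (glue_space D \<pi> M) \<inter> (W \<times> V) \<subseteq> U"
    by (metis glue_space_box_basis)
  then show "infinite (U \<inter> B)" using assms(2) by (meson Int_mono infinite_super order_refl SigmaE2)
qed

lemma glue_space_accumulation_point_line:
  assumes "accumulation_point M N m" "N \<subseteq> topspace M"
  shows "accumulation_point (glue_space D \<pi> M) ({None} \<times> N) (None, m)"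
proof (rule glue_space_accumulation_point_None)
  show "m \<in> topspace M" using assms(1) unfolding accumulation_point_def by blast
  fix W V assume WV: "openin (alpha_topology D) W" "None \<in> W" "openin M V" "m \<in> V"
  then have "infinite ((\<lambda>a. (None, a)) ` (V \<inter> N))"
    using assms(1) unfolding accumulation_point_def by (simp add: finite_image_iff inj_on_def)
  moreover have "(\<lambda>a. (None, a)) ` (V \<inter> N) \<subseteq> topspace (glue_space D \<pi> M) \<inter> (W \<times> V) \<inter> ({None} \<times> N)"
    using WV(2) assms(2) unfolding glue_space_def by (auto simp: topspace_alpha_topology)
  ultimately show "infinite (topspace (glue_space D \<pi> M) \<inter> (W \<times> V) \<inter> ({None} \<times> N))"
    by (rule infinite_super[rotated])
qed

text \<open>Graph points over E accumulate at (None, m) if \<pi> maps infinitely many points of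
  E into each neighbourhood of m; neighbourhoods of \<infinity> in \<alpha>D being cofinite, only
  finitely many of these are lost.\<close>

lemma glue_space_accumulation_point_graph:
  assumes "E \<subseteq> D" "m \<in> topspace M"
    and "\<And>V. openin M V \<Longrightarrow> m \<in> V \<Longrightarrow> infinite {d\<in>E. \<pi> d \<in> V}"
  shows "accumulation_point (glue_space D \<pi> M) (graph_points E \<pi>) (None, m)"
proof (rule glue_space_accumulation_point_None[OF assms(2)])
  fix W V assume WV: "openin (alpha_topology D) W" "None \<in> W" "openin M V" "m \<in> V"
  let ?F = "{d\<in>E. \<pi> d \<in> V} - {d\<in>D. Some d \<notin> W}"
  have "infinite ?F"
    using Diff_infinite_finite[OF alpha_topology_nbhd_None[OF WV(1,2)] assms(3)[OF WV(3,4)]] .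
  then have "infinite ((\<lambda>d. (Some d, \<pi> d)) ` ?F)" by (simp add: finite_image_iff inj_on_def)
  moreover have "(\<lambda>d. (Some d, \<pi> d)) ` ?F
                   \<subseteq> topspace (glue_space D \<pi> M) \<inter> (W \<times> V) \<inter> graph_points E \<pi>"
    using assms(1) openin_subset[OF WV(3)] unfolding glue_space_def graph_points_def
    by (auto simp: topspace_alpha_topology)
  ultimately show "infinite (topspace (glue_space D \<pi> M) \<inter> (W \<times> V) \<inter> graph_points E \<pi>)"
    by (rule infinite_super[rotated])
qed

section \<open>Transfer of density and countable compactness\<close>

lemma graph_points_subset_dense:
  assumes "\<pi> ` D \<subseteq> topspace M" "glue_space D \<pi> M closure_of B = topspace (glue_space D \<pi> M)"
  shows "graph_points D \<pi> \<subseteq> B"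
  using isolated_in_dense[OF assms(2)] openin_glue_space_graph_point[OF assms(1)]
  unfolding graph_points_def by blast

lemma snd_image_subset_topspace:
  assumes "\<pi> ` D \<subseteq> topspace M" "B \<subseteq> topspace (glue_space D \<pi> M)"
  shows "snd ` B \<subseteq> topspace M"
proof
  fix m assume "m \<in> snd ` B"
  then obtain b where "b \<in> graph_points D \<pi> \<union> {None} \<times> topspace M" "m = snd b"
    using assms(2) topspace_glue_space[OF assms(1)] by blast
  then show "m \<in> topspace M" using assms(1) by (auto simp: graph_points_def)
qed

lemma dense_in_glue_space_snd:
  assumes "\<pi> ` D \<subseteq> topspace M" "glue_space D \<pi> M closure_of B = topspace (glue_space D \<pi> M)"
  shows "M closure_of (snd ` B) = topspace M"
proof (rule subset_antisym[OF closure_of_subset_topspace subsetI])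
  let ?X = "glue_space D \<pi> M"
  fix m assume m: "m \<in> topspace M"
  show "m \<in> M closure_of (snd ` B)" unfolding in_closure_of
  proof (intro conjI allI impI)
    fix V assume V: "m \<in> V \<and> openin M V"
    let ?U = "topspace ?X \<inter> (topspace (alpha_topology D) \<times> V)"
    have "(None, m) \<in> ?X closure_of B"
      using assms m by (simp add: topspace_glue_space)
    moreover have "openin ?X ?U" using V by (simp add: openin_glue_space_box)
    moreover have "(None, m) \<in> ?U"
      using assms(1) m V by (simp add: topspace_glue_space topspace_alpha_topology)
    ultimately obtain b where "b \<in> B" "b \<in> ?U"
      unfolding in_closure_of by (meson IntE)
    then have "snd b \<in> snd ` B" "snd b \<in> V" by (auto simp: mem_Times_iff)
    then show "\<exists>y. y \<in> snd ` B \<and> y \<in> V" by blast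
  qed (rule m)
qed

text \<open>Countable compactness at B passes to the projection snd ` B: an infinite subset
  of snd ` B lifts injectively into B.\<close>

lemma countably_compact_at_glue_space_snd:
  assumes "\<pi> ` D \<subseteq> topspace M" "countably_compact_at (glue_space D \<pi> M) B"
  shows "countably_compact_at M (snd ` B)"
  unfolding countably_compact_at_iff_accumulation_point
proof (intro allI impI)
  fix S assume S: "S \<subseteq> snd ` B \<and> infinite S"
  let ?lift = "inv_into B snd"
  have lift: "?lift s \<in> B \<and> snd (?lift s) = s" if "s \<in> S" for s
    using S that by (meson inv_into_into f_inv_into_f subsetD)
  then have lift_B: "?lift ` S \<subseteq> B" by blast
  have "(snd \<circ> ?lift) ` S = (\<lambda>s. s) ` S" by (rule image_cong) (simp_all add: lift)
  then have snd_lift: "snd ` ?lift ` S = S" by (simp add: image_comp)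
  have "inj_on snd (?lift ` S)" using lift by (auto simp: inj_on_def)
  moreover have "infinite (?lift ` S)" using S snd_lift by (metis finite_imageI)
  moreover obtain p where "accumulation_point (glue_space D \<pi> M) (?lift ` S) p"
    using assms(2) lift_B \<open>infinite (?lift ` S)\<close> unfolding countably_compact_at_iff_accumulation_point by blast
  ultimately show "\<exists>m. accumulation_point M S m"
    using glue_space_accumulation_point_projects[OF assms(1)] snd_lift by metis
qed

lemma dense_in_glue_space_from_M:
  assumes "A \<subseteq> topspace M" "M closure_of A = topspace M"
  shows "glue_space D \<pi> M closure_of (graph_points D \<pi> \<union> {None} \<times> A)
           = topspace (glue_space D \<pi> M)"
proof (rule subset_antisym[OF closure_of_subset_topspace subsetI])
  let ?X = "glue_space D \<pi> M" and ?B = "graph_points D \<pi> \<union> {None} \<times> A"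
  fix p assume p: "p \<in> topspace ?X"
  show "p \<in> ?X closure_of ?B" unfolding in_closure_of
  proof (intro conjI allI impI)
    fix U assume U: "p \<in> U \<and> openin ?X U"
    show "\<exists>y. y \<in> ?B \<and> y \<in> U"
    proof (cases "p \<in> graph_points D \<pi>")
      case False
      then obtain m where m: "p = (None, m)" "m \<in> topspace M"
        using p unfolding glue_space_def graph_points_def by auto
      obtain W V where WV: "openin (alpha_topology D) W" "openin M V" "p \<in> W \<times> V"
          "topspace ?X \<inter> (W \<times> V) \<subseteq> U"
        using U glue_space_box_basis by metis
      have "m \<in> M closure_of A" using assms(2) m(2) by simp
      then obtain a where "a \<in> A" "a \<in> V" using WV(2,3) m(1) unfolding in_closure_of by blast
      moreover have "(None, a) \<in> topspace ?X"
        using \<open>a \<in> A\<close> assms(1) unfolding glue_space_def by (auto simp: topspace_alpha_topology)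
      ultimately show ?thesis using WV(3,4) m(1) by blast
    qed (use U in blast)
  qed (rule p)
qed

lemma countably_compact_at_glue_space_from_M:
  assumes "countably_compact_at M A" "\<pi> ` D \<subseteq> A" "A \<subseteq> topspace M"
  shows "countably_compact_at (glue_space D \<pi> M) (graph_points D \<pi> \<union> {None} \<times> A)"
  unfolding countably_compact_at_iff_accumulation_point
proof (intro allI impI)
  let ?X = "glue_space D \<pi> M"
  fix B assume B: "B \<subseteq> graph_points D \<pi> \<union> {None} \<times> A \<and> infinite B"
  define E where "E = {d\<in>D. (Some d, \<pi> d) \<in> B}"
  define N where "N = {a\<in>A. (None, a) \<in> B}"
  have split: "B \<subseteq> graph_points E \<pi> \<union> {None} \<times> N" "graph_points E \<pi> \<subseteq> B" "{None} \<times> N \<subseteq> B"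
    using B unfolding E_def N_def graph_points_def by auto
  then consider "infinite E" | "infinite N"
    using B unfolding graph_points_def by (meson finite_SigmaI finite_UnI finite_imageI finite.emptyI
        finite_insert finite_subset)
  then show "\<exists>x. accumulation_point ?X B x"
  proof cases
    case 1
    have "\<pi> ` E \<subseteq> A" using assms(2) unfolding E_def by blast
    then obtain m where m: "m \<in> topspace M"
        "\<forall>V. openin M V \<and> m \<in> V \<longrightarrow> infinite {d\<in>E. \<pi> d \<in> V}"
      using accumulation_of_image[OF assms(1) _ assms(3) 1] by blast
    have "E \<subseteq> D" unfolding E_def by blast
    have "accumulation_point ?X (graph_points E \<pi>) (None, m)"
    proof (rule glue_space_accumulation_point_graph[OF \<open>E \<subseteq> D\<close> m(1)])
      fix V assume "openin M V" "m \<in> V"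
      then show "infinite {d\<in>E. \<pi> d \<in> V}" using m(2) by blast
    qed
    then have "accumulation_point ?X B (None, m)" by (rule accumulation_point_mono[OF _ split(2)])
    then show ?thesis ..
  next
    case 2
    have "N \<subseteq> A" unfolding N_def by blast
    then obtain m where "accumulation_point M N m"
      using assms(1) 2 unfolding countably_compact_at_iff_accumulation_point by blast
    moreover have "N \<subseteq> topspace M" using assms(3) unfolding N_def by blast
    ultimately have "accumulation_point ?X ({None} \<times> N) (None, m)"
      by (rule glue_space_accumulation_point_line)
    then have "accumulation_point ?X B (None, m)" by (rule accumulation_point_mono[OF _ split(3)])
    then show ?thesis ..
  qed
qed

theorem proposition1p6:
  fixes D :: "'a set" and M :: "'b topology" and \<pi> :: "'a \<Rightarrow> 'b"
  assumes "Hausdorff_space M"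
    and "\<pi> ` D \<subseteq> topspace M"
  shows "countably_pracompact (glue_space D \<pi> M) \<longleftrightarrow>
         (\<exists>A. A \<subseteq> topspace M \<and> M closure_of A = topspace M \<and> \<pi> ` D \<subseteq> A
              \<and> countably_compact_at M A)"
proof
  assume "countably_pracompact (glue_space D \<pi> M)"
  then obtain B where B: "B \<subseteq> topspace (glue_space D \<pi> M)"
      "glue_space D \<pi> M closure_of B = topspace (glue_space D \<pi> M)"
      "countably_compact_at (glue_space D \<pi> M) B"
    unfolding countably_pracompact_def by blast
  have "\<pi> ` D \<subseteq> snd ` B"
    using graph_points_subset_dense[OF assms(2) B(2)] unfolding graph_points_def by force
  moreover have "snd ` B \<subseteq> topspace M"
    using snd_image_subset_topspace[OF assms(2) B(1)] .
  ultimately show "\<exists>A. A \<subseteq> topspace M \<and> M closure_of A = topspace M \<and> \<pi> ` D \<subseteq> A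
                     \<and> countably_compact_at M A"
    using dense_in_glue_space_snd[OF assms(2) B(2)]
      countably_compact_at_glue_space_snd[OF assms(2) B(3)] by blast
next
  assume "\<exists>A. A \<subseteq> topspace M \<and> M closure_of A = topspace M \<and> \<pi> ` D \<subseteq> A
            \<and> countably_compact_at M A"
  then obtain A where A: "A \<subseteq> topspace M" "M closure_of A = topspace M" "\<pi> ` D \<subseteq> A"
      "countably_compact_at M A" by blast
  have "graph_points D \<pi> \<union> {None} \<times> A \<subseteq> topspace (glue_space D \<pi> M)"
    using A(1) assms(2) by (auto simp: topspace_glue_space)
  then show "countably_pracompact (glue_space D \<pi> M)"
    unfolding countably_pracompact_def
    using dense_in_glue_space_from_M[OF A(1,2)]
      countably_compact_at_glue_space_from_M[OF A(4,3,1)] by blast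
qed

end
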